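(* Let $(\mu,\nu)\in\boldsymbol{\mathcal P}$ and consider the RRU with initial composition $(x,y)\in\mathbb S$, $D_0=x+y\ge2\beta$. Let $Z_n=Z_0+M_n+A_n$ be the Doob decomposition of $Z_n$ with respect to $\{\mathcal A_n\}$ and $\langle M\rangle_n$ the bracket (predictable quadratic variation) process of $M$, with $\langle M\rangle_\infty=\lim_n\langle M\rangle_n$. Then for all $n\ge0$, $$\mathbb E\big(\langle M\rangle_\infty-\langle M\rangle_n\,\big|\,\mathcal A_n\big)\le\frac{\beta}{D_0}.$$
   Context: Fix $0<m_0\le\beta<\infty$. $\boldsymbol{\mathcal P}$: pairs $(\mu,\nu)$ of probability measures on $[0,\beta]$ with $\int k\,\mu(dk)=\int k\,\nu(dk)\ge m_0$. $\mathbb S=[0,\infty)^2\setminus\{(0,0)\}$. RRU: with $\{U_n\}$ i.i.d. uniform$[0,1]$ independent of i.i.d. $\{(V_n,W_n)\}$ with uniform$[0,1]$ marginals, $R_X(n)=q_\mu(V_n)$, $R_Y(n)=q_\nu(W_n)$, $X_0=x,Y_0=y$, $X_{n+1}=X_n+R_X(n+1)\mathbb I(n+1)$, $Y_{n+1}=Y_n+R_Y(n+1)(1-\mathbb I(n+1))$, $\mathbb I(n+1)=\mathbf 1\{U_{n+1}\le X_n/(X_n+Y_n)\}$; $D_n=X_n+Y_n$, $Z_n=X_n/D_n$; $\mathcal A_n=\sigma(\mathbb I(j),R_X(j),R_Y(j):j\le n)$. $M$ is the zero-mean martingale part ($M_0=0$) and $A$ the predictable part ($A_0=0$) of the Doob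 decomposition; $\langle M\rangle$ is the predictable increasing process with $\langle M\rangle_0=0$ such that $M_n^2-\langle M\rangle_n$ is a martingale. *)

theory Defs
  imports "HOL-Probability.Probability"
begin

definition quantile :: "real measure \<Rightarrow> real \<Rightarrow> real" where
  "quantile \<mu> v = Inf {k. v \<le> measure \<mu> {..k}}"

text \<open>Composition (X_n, Y_n) of the randomly reinforced urn. The random variables
  U, V, W are indexed from 1 (index 0 is unused).\<close>
primrec rru_state :: "real measure \<Rightarrow> real measure \<Rightarrow> (nat \<Rightarrow> 'a \<Rightarrow> real) \<Rightarrow>
    (nat \<Rightarrow> 'a \<Rightarrow> real) \<Rightarrow> (nat \<Rightarrow> 'a \<Rightarrow> real) \<Rightarrow> real \<Rightarrow> real \<Rightarrow> nat \<Rightarrow> 'a \<Rightarrow> real \<times> real"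
where
  "rru_state \<mu> \<nu> U V W x y 0 \<omega> = (x, y)"
| "rru_state \<mu> \<nu> U V W x y (Suc n) \<omega> =
     (let (Xn, Yn) = rru_state \<mu> \<nu> U V W x y n \<omega>;
          I = (if U (Suc n) \<omega> \<le> Xn / (Xn + Yn) then 1 else 0 :: real)
      in (Xn + quantile \<mu> (V (Suc n) \<omega>) * I, Yn + quantile \<nu> (W (Suc n) \<omega>) * (1 - I)))"

definition rru_I :: "real measure \<Rightarrow> real measure \<Rightarrow> (nat \<Rightarrow> 'a \<Rightarrow> real) \<Rightarrow>
    (nat \<Rightarrow> 'a \<Rightarrow> real) \<Rightarrow> (nat \<Rightarrow> 'a \<Rightarrow> real) \<Rightarrow> real \<Rightarrow> real \<Rightarrow> nat \<Rightarrow> 'a \<Rightarrow> real" where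
  "rru_I \<mu> \<nu> U V W x y n \<omega> =
     (let (Xp, Yp) = rru_state \<mu> \<nu> U V W x y (n - 1) \<omega>
      in if U n \<omega> \<le> Xp / (Xp + Yp) then 1 else 0)"

definition rru_filt :: "'a measure \<Rightarrow> real measure \<Rightarrow> real measure \<Rightarrow> (nat \<Rightarrow> 'a \<Rightarrow> real) \<Rightarrow>
    (nat \<Rightarrow> 'a \<Rightarrow> real) \<Rightarrow> (nat \<Rightarrow> 'a \<Rightarrow> real) \<Rightarrow> real \<Rightarrow> real \<Rightarrow> nat \<Rightarrow> 'a measure" where
  "rru_filt M \<mu> \<nu> U V W x y n = sigma (space M)
     (\<Union>j\<in>{1..n}. \<Union>f\<in>{rru_I \<mu> \<nu> U V W x y j, \<lambda>\<omega>. quantile \<mu> (V j \<omega>), \<lambda>\<omega>. quantile \<nu> (W j \<omega>)}.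
        {f -` B \<inter> space M | B. B \<in> sets borel})"

definition rru_Z :: "real measure \<Rightarrow> real measure \<Rightarrow> (nat \<Rightarrow> 'a \<Rightarrow> real) \<Rightarrow>
    (nat \<Rightarrow> 'a \<Rightarrow> real) \<Rightarrow> (nat \<Rightarrow> 'a \<Rightarrow> real) \<Rightarrow> real \<Rightarrow> real \<Rightarrow> nat \<Rightarrow> 'a \<Rightarrow> real" where
  "rru_Z \<mu> \<nu> U V W x y n \<omega> =
     (let (Xn, Yn) = rru_state \<mu> \<nu> U V W x y n \<omega> in Xn / (Xn + Yn))"

definition rru_A :: "'a measure \<Rightarrow> real measure \<Rightarrow> real measure \<Rightarrow> (nat \<Rightarrow> 'a \<Rightarrow> real) \<Rightarrow>
    (nat \<Rightarrow> 'a \<Rightarrow> real) \<Rightarrow> (nat \<Rightarrow> 'a \<Rightarrow> real) \<Rightarrow> real \<Rightarrow> real \<Rightarrow> nat \<Rightarrow> 'a \<Rightarrow> real" where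
  "rru_A M \<mu> \<nu> U V W x y n \<omega> =
     (\<Sum>j<n. real_cond_exp M (rru_filt M \<mu> \<nu> U V W x y j)
        (\<lambda>\<omega>'. rru_Z \<mu> \<nu> U V W x y (Suc j) \<omega>' - rru_Z \<mu> \<nu> U V W x y j \<omega>') \<omega>)"

definition rru_M :: "'a measure \<Rightarrow> real measure \<Rightarrow> real measure \<Rightarrow> (nat \<Rightarrow> 'a \<Rightarrow> real) \<Rightarrow>
    (nat \<Rightarrow> 'a \<Rightarrow> real) \<Rightarrow> (nat \<Rightarrow> 'a \<Rightarrow> real) \<Rightarrow> real \<Rightarrow> real \<Rightarrow> nat \<Rightarrow> 'a \<Rightarrow> real" where
  "rru_M M \<mu> \<nu> U V W x y n \<omega> =
     rru_Z \<mu> \<nu> U V W x y n \<omega> - rru_Z \<mu> \<nu> U V W x y 0 \<omega> - rru_A M \<mu> \<nu> U V W x y n \<omega>"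

definition rru_bracket :: "'a measure \<Rightarrow> real measure \<Rightarrow> real measure \<Rightarrow> (nat \<Rightarrow> 'a \<Rightarrow> real) \<Rightarrow>
    (nat \<Rightarrow> 'a \<Rightarrow> real) \<Rightarrow> (nat \<Rightarrow> 'a \<Rightarrow> real) \<Rightarrow> real \<Rightarrow> real \<Rightarrow> nat \<Rightarrow> 'a \<Rightarrow> real" where
  "rru_bracket M \<mu> \<nu> U V W x y n \<omega> =
     (\<Sum>j<n. real_cond_exp M (rru_filt M \<mu> \<nu> U V W x y j)
        (\<lambda>\<omega>'. (rru_M M \<mu> \<nu> U V W x y (Suc j) \<omega>' - rru_M M \<mu> \<nu> U V W x y j \<omega>')\<^sup>2) \<omega>)"

text \<open><M>_infinity = lim_n <M>_n, taken in [0,\<infinity>] (the process is increasing, so the limit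
  is the supremum).\<close>
definition rru_bracket_inf :: "'a measure \<Rightarrow> real measure \<Rightarrow> real measure \<Rightarrow> (nat \<Rightarrow> 'a \<Rightarrow> real) \<Rightarrow>
    (nat \<Rightarrow> 'a \<Rightarrow> real) \<Rightarrow> (nat \<Rightarrow> 'a \<Rightarrow> real) \<Rightarrow> real \<Rightarrow> real \<Rightarrow> 'a \<Rightarrow> ennreal" where
  "rru_bracket_inf M \<mu> \<nu> U V W x y \<omega> = (SUP n. ennreal (rru_bracket M \<mu> \<nu> U V W x y n \<omega>))"

end

theory Submission
  imports Defs
begin

text \<open>
  Along every path, adding a reinforcement \<open>R \<le> \<beta>\<close> to an urn of total size \<open>D\<close> moves the
  proportion by at most \<open>R / (D + R)\<close>, whence \<open>(Z\<^sub>n\<^sub>+\<^sub>1 - Z\<^sub>n)\<^sup>2 \<le> \<beta> (1/D\<^sub>n - 1/D\<^sub>n\<^sub>+\<^sub>1)\<close>, and the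
  squared increments of \<open>Z\<close> telescope to at most \<open>\<beta>/D\<^sub>0\<close>. The increment of the bracket is the
  conditional variance of the increment of \<open>Z\<close>, which is dominated by its conditional second
  moment; summing over the future and conditioning on \<open>\<A>\<^sub>n\<close> gives the bound.
\<close>

lemma urn_proportion_gain_sq_le:
  fixes X Y R b :: real
  assumes "0 \<le> X" "0 \<le> Y" "0 < X + Y" "0 \<le> R" "R \<le> b"
  shows "((X + R) / (X + Y + R) - X / (X + Y))\<^sup>2 \<le> b * (1 / (X + Y) - 1 / (X + Y + R))"
proof -
  define D where "D = X + Y"
  have D: "0 < D" and DR: "0 < D + R" using assms by (auto simp: D_def)
  have step: "(X + R) / (D + R) - X / D = R / (D + R) * (Y / D)"
    using D DR by (simp add: D_def field_simps)
  have "0 \<le> Y / D" "Y / D \<le> 1" using D assms by (auto simp: D_def)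
  then have "(R / (D + R) * (Y / D))\<^sup>2 \<le> (R / (D + R))\<^sup>2"
    unfolding power_mult_distrib by (intro mult_left_le power_le_one) auto
  also have "\<dots> \<le> b / D * (R / (D + R))"
  proof -
    have "R / (D + R) \<le> b / D"
      using D DR assms by (simp add: divide_simps) (smt (verit) mult_mono)
    then show ?thesis unfolding power2_eq_square by (rule mult_right_mono) (use DR assms in simp)
  qed
  also have "\<dots> = b * (1 / D - 1 / (D + R))" using D DR by (simp add: field_simps)
  finally show ?thesis using step by (simp add: D_def add.assoc)
qed

lemma urn_proportion_loss_sq_le:
  fixes X Y R b :: real
  assumes "0 \<le> X" "0 \<le> Y" "0 < X + Y" "0 \<le> R" "R \<le> b"
  shows "(X / (X + Y + R) - X / (X + Y))\<^sup>2 \<le> b * (1 / (X + Y) - 1 / (X + Y + R))"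
proof -
  have "X / (X + Y + R) - X / (X + Y) = -((Y + R) / (Y + X + R) - Y / (Y + X))"
    using assms by (simp add: field_simps)
  then have "(X / (X + Y + R) - X / (X + Y))\<^sup>2 = ((Y + R) / (Y + X + R) - Y / (Y + X))\<^sup>2"
    by (metis power2_minus)
  then show ?thesis
    using urn_proportion_gain_sq_le[of Y X R b] assms by (simp add: add.commute add.left_commute)
qed

lemma quantile_nonpos: "v \<le> 0 \<Longrightarrow> quantile \<mu> v = Inf UNIV"
  unfolding quantile_def by (metis (mono_tags) Collect_cong UNIV_def measure_nonneg order.trans)

lemma quantile_gt_1: "prob_space \<mu> \<Longrightarrow> 1 < v \<Longrightarrow> quantile \<mu> v = Inf {}"
  unfolding quantile_def by (metis (mono_tags) Collect_empty_eq not_le order.strict_trans1 prob_space.prob_le_1)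

lemma quantile_level_set_bounds:
  fixes \<mu> :: "real measure"
  assumes "prob_space \<mu>" "sets \<mu> = sets borel" "measure \<mu> {a..b} = 1" "0 < v" "v \<le> 1"
  shows "b \<in> {k. v \<le> measure \<mu> {..k}}" and "\<And>k. k \<in> {k. v \<le> measure \<mu> {..k}} \<Longrightarrow> a \<le> k"
proof -
  interpret prob_space \<mu> by fact
  have space: "space \<mu> = UNIV" using assms(2) sets_eq_imp_space_eq[of \<mu> borel] by simp
  have "measure \<mu> {a..b} \<le> measure \<mu> {..b}"
    by (intro finite_measure_mono) (auto simp: assms(2))
  then show "b \<in> {k. v \<le> measure \<mu> {..k}}" using assms by simp
  fix k assume k: "k \<in> {k. v \<le> measure \<mu> {..k}}"
  show "a \<le> k"
  proof (rule ccontr)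
    assume "\<not> a \<le> k"
    then have "measure \<mu> {..k} \<le> measure \<mu> (space \<mu> - {a..b})"
      by (intro finite_measure_mono) (auto simp: assms(2) space)
    also have "\<dots> = 0" using prob_compl[of "{a..b}"] assms by (simp add: assms(2))
    finally show False using k assms by simp
  qed
qed

lemma quantile_bounds:
  assumes "prob_space \<mu>" "sets \<mu> = sets borel" "measure \<mu> {a..b} = 1" "0 < v" "v \<le> 1"
  shows "a \<le> quantile \<mu> v" "quantile \<mu> v \<le> b"
proof -
  note level_set = quantile_level_set_bounds[OF assms]
  show "quantile \<mu> v \<le> b" unfolding quantile_def
    by (rule cInf_lower[OF level_set(1)]) (use level_set(2) in \<open>auto simp: bdd_below_def\<close>)
  show "a \<le> quantile \<mu> v" unfolding quantile_def
    by (rule cInf_greatest) (use level_set in auto)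
qed

lemma quantile_mono:
  assumes "prob_space \<mu>" "sets \<mu> = sets borel" "measure \<mu> {a..b} = 1"
    and "0 < r" "r \<le> s" "s \<le> 1"
  shows "quantile \<mu> r \<le> quantile \<mu> s"
  unfolding quantile_def
proof (rule cInf_superset_mono)
  show "{k. s \<le> measure \<mu> {..k}} \<noteq> {}"
    using quantile_level_set_bounds(1)[OF assms(1-3), of s] assms(4-6) by auto
  show "bdd_below {k. r \<le> measure \<mu> {..k}}"
    using quantile_level_set_bounds(2)[OF assms(1-4)] assms(5,6) by (auto simp: bdd_below_def)
  show "{k. s \<le> measure \<mu> {..k}} \<subseteq> {k. r \<le> measure \<mu> {..k}}" using assms(5) by auto
qed

lemma borel_measurable_quantile:
  assumes "prob_space \<mu>" "sets \<mu> = sets borel" "measure \<mu> {a..b} = 1"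
  shows "quantile \<mu> \<in> borel_measurable borel"
proof (rule borel_measurable_piecewise_mono[of "{{..0}, {0<..1}, {1<..}}"])
  show "\<Union> {{..0::real}, {0<..1}, {1<..}} = UNIV" by auto
  fix c assume "c \<in> {{..0::real}, {0<..1}, {1<..}}"
  then consider "c = {..0}" | "c = {0<..1}" | "c = {1<..}" by blast
  then show "mono_on c (quantile \<mu>)"
  proof cases
    case 1
    then show ?thesis by (intro mono_onI) (simp add: quantile_nonpos)
  next
    case 2
    then show ?thesis by (intro mono_onI) (auto intro: quantile_mono[OF assms])
  next
    case 3
    then show ?thesis by (intro mono_onI) (simp add: quantile_gt_1[OF assms(1)])
  qed
qed auto

context finite_measure_subalgebra
begin

lemma real_cond_exp_abs_le_const:
  fixes f :: "'a \<Rightarrow> real"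
  assumes [measurable]: "f \<in> borel_measurable M" and bound: "AE x in M. \<bar>f x\<bar> \<le> c"
  shows "AE x in M. \<bar>real_cond_exp M F f x\<bar> \<le> c"
proof -
  have f_int: "integrable M f"
    using bound by (intro integrable_const_bound[where B = c]) auto
  have "AE x in M. real_cond_exp M F f x \<le> c"
    by (rule real_cond_exp_le_c[OF f_int]) (use bound in auto)
  moreover have "AE x in M. - c \<le> real_cond_exp M F f x"
    by (rule real_cond_exp_ge_c[OF f_int]) (use bound in auto)
  ultimately show ?thesis by eventually_elim auto
qed

lemma set_integral_sq_centered_le:
  fixes f :: "'a \<Rightarrow> real"
  assumes [measurable]: "f \<in> borel_measurable M" and bound: "AE x in M. \<bar>f x\<bar> \<le> c"
    and [measurable]: "A \<in> sets F"
  shows "(\<integral>x. indicator A x * (f x - real_cond_exp M F f x)\<^sup>2 \<partial>M) \<le> (\<integral>x. indicator A x * (f x)\<^sup>2 \<partial>M)"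
proof -
  let ?e = "real_cond_exp M F f"
  have [measurable]: "A \<in> sets M" using subalg by (auto simp: subalgebra_def)
  have bounds: "AE x in M. \<bar>f x\<bar> \<le> c \<and> \<bar>?e x\<bar> \<le> c"
    using bound real_cond_exp_abs_le_const[OF assms(1) bound] by eventually_elim auto
  have integrable_bounded_product:
    "integrable M (\<lambda>x. indicator A x * g x * h x)"
    if [measurable]: "g \<in> borel_measurable M" "h \<in> borel_measurable M"
      and "AE x in M. \<bar>g x\<bar> \<le> c \<and> \<bar>h x\<bar> \<le> c" for g h :: "'a \<Rightarrow> real"
  proof (rule integrable_const_bound[where B = "c * c"])
    show "AE x in M. norm (indicator A x * g x * h x) \<le> c * c"
      using that(3) by eventually_elim (auto simp: indicator_def abs_mult intro: mult_mono)
  qed measurable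
  have int_ff: "integrable M (\<lambda>x. indicator A x * f x * f x)"
    by (rule integrable_bounded_product) (use bounds in auto)
  have int_ef: "integrable M (\<lambda>x. indicator A x * ?e x * f x)"
    by (rule integrable_bounded_product) (use bounds in auto)
  have int_ee: "integrable M (\<lambda>x. indicator A x * ?e x * ?e x)"
    by (rule integrable_bounded_product) (use bounds in auto)
  have orth: "(\<integral>x. indicator A x * ?e x * ?e x \<partial>M) = (\<integral>x. indicator A x * ?e x * f x \<partial>M)"
    by (rule real_cond_exp_intg(2)[OF int_ef]) measurable
  have "(\<integral>x. indicator A x * (f x - ?e x)\<^sup>2 \<partial>M)
      = (\<integral>x. indicator A x * f x * f x - 2 * (indicator A x * ?e x * f x) + indicator A x * ?e x * ?e x \<partial>M)"
    by (rule Bochner_Integration.integral_cong) (simp_all add: power2_eq_square algebra_simps)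
  also have "\<dots> = (\<integral>x. indicator A x * f x * f x \<partial>M) - (\<integral>x. indicator A x * ?e x * ?e x \<partial>M)"
    using int_ff int_ef int_ee orth by simp
  also have "\<dots> \<le> (\<integral>x. indicator A x * (f x)\<^sup>2 \<partial>M)"
    by (simp add: power2_eq_square mult.assoc)
  finally show ?thesis .
qed

lemma nn_set_integral_cond_variance_le:
  fixes f :: "'a \<Rightarrow> real"
  assumes [measurable]: "f \<in> borel_measurable M" and bound: "AE x in M. \<bar>f x\<bar> \<le> c"
    and [measurable]: "A \<in> sets F"
  shows "(\<integral>\<^sup>+x. ennreal (real_cond_exp M F (\<lambda>x. (f x - real_cond_exp M F f x)\<^sup>2) x) * indicator A x \<partial>M)
    \<le> (\<integral>\<^sup>+x. ennreal ((f x)\<^sup>2) * indicator A x \<partial>M)"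
proof -
  let ?v = "\<lambda>x. (f x - real_cond_exp M F f x)\<^sup>2"
  have [measurable]: "A \<in> sets M" using subalg by (auto simp: subalgebra_def)
  have sq_le: "t\<^sup>2 \<le> b\<^sup>2" if "\<bar>t\<bar> \<le> b" for t b :: real
    using that by (meson abs_ge_zero order_trans power2_le_iff_abs_le)
  have "AE x in M. \<bar>f x - real_cond_exp M F f x\<bar> \<le> 2 * c"
    using bound real_cond_exp_abs_le_const[OF assms(1) bound] by eventually_elim auto
  then have "AE x in M. norm (?v x) \<le> (2 * c)\<^sup>2"
    by eventually_elim (metis abs_power2 real_norm_def sq_le)
  then have v_int: "integrable M ?v"
    by (rule integrable_const_bound) measurable
  have "AE x in M. norm ((f x)\<^sup>2) \<le> c\<^sup>2"
    using bound by eventually_elim (metis abs_power2 real_norm_def sq_le)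
  then have sq_int: "integrable M (\<lambda>x. (f x)\<^sup>2)"
    by (rule integrable_const_bound) measurable
  have ennreal_indicator: "ennreal r * indicator A x = ennreal (indicator A x * r)" for r x
    by (simp add: indicator_def)
  have "(\<integral>\<^sup>+x. ennreal (real_cond_exp M F ?v x) * indicator A x \<partial>M)
      = ennreal (\<integral>x. indicator A x * real_cond_exp M F ?v x \<partial>M)"
    unfolding ennreal_indicator
  proof (rule nn_integral_eq_integral)
    show "integrable M (\<lambda>x. indicator A x * real_cond_exp M F ?v x)"
      using integrable_mult_indicator[OF _ real_cond_exp_int(1)[OF v_int]] by simp
    show "AE x in M. 0 \<le> indicator A x * real_cond_exp M F ?v x"
    proof -
      have "AE x in M. 0 \<le> real_cond_exp M F ?v x" by (rule real_cond_exp_pos) auto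
      then show ?thesis by eventually_elim (simp add: indicator_def)
    qed
  qed
  also have "\<dots> = ennreal (\<integral>x. indicator A x * ?v x \<partial>M)"
    using integrable_mult_indicator[OF _ v_int] by (subst real_cond_exp_intg(2)) auto
  also have "\<dots> \<le> ennreal (\<integral>x. indicator A x * (f x)\<^sup>2 \<partial>M)"
    by (rule ennreal_leI, rule set_integral_sq_centered_le[OF assms])
  also have "\<dots> = (\<integral>\<^sup>+x. ennreal ((f x)\<^sup>2) * indicator A x \<partial>M)"
    unfolding ennreal_indicator
    by (rule nn_integral_eq_integral[symmetric]) (use integrable_mult_indicator[OF _ sq_int] in auto)
  finally show ?thesis .
qed

lemma AE_nn_cond_exp_le_const:
  assumes [measurable]: "f \<in> borel_measurable M" and "C \<noteq> \<infinity>"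
    and le: "\<And>A. A \<in> sets F \<Longrightarrow> (\<integral>\<^sup>+x. f x * indicator A x \<partial>M) \<le> C * emeasure M A"
  shows "AE x in M. nn_cond_exp M F f x \<le> C"
proof -
  let ?h = "nn_cond_exp M F f"
  define A where "A = {x \<in> space M. C < ?h x}"
  have space_F: "space F = space M" using subalg by (simp add: subalgebra_def)
  have A_F [measurable]: "A \<in> sets F"
  proof -
    have "{x \<in> space F. C < ?h x} \<in> sets F" by measurable
    then show ?thesis unfolding A_def space_F .
  qed
  have [measurable]: "A \<in> sets M" using subalg by (auto simp: subalgebra_def)
  have "AE x in M. ?h x * indicator A x \<le> C * indicator A x"
  proof (rule ccontr)
    assume "\<not> (AE x in M. ?h x * indicator A x \<le> C * indicator A x)"
    moreover have "(\<integral>\<^sup>+x. C * indicator A x \<partial>M) \<noteq> \<infinity>"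
      using \<open>C \<noteq> \<infinity>\<close> by (simp add: nn_integral_cmult_indicator ennreal_mult_eq_top_iff)
    moreover have "AE x in M. C * indicator A x \<le> ?h x * indicator A x"
      by (intro AE_I2) (auto simp: A_def indicator_def less_imp_le)
    ultimately have "(\<integral>\<^sup>+x. C * indicator A x \<partial>M) < (\<integral>\<^sup>+x. ?h x * indicator A x \<partial>M)"
      by (intro nn_integral_less) auto
    also have "\<dots> = (\<integral>\<^sup>+x. f x * indicator A x \<partial>M)"
      using nn_cond_exp_intg[of "indicator A" f] by (simp add: mult.commute)
    also have "\<dots> \<le> (\<integral>\<^sup>+x. C * indicator A x \<partial>M)"
      using le[OF A_F] by (simp add: nn_integral_cmult_indicator)
    finally show False by simp
  qed
  then show ?thesis using AE_space
  proof eventually_elim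
    case (elim x)
    then show ?case by (cases "x \<in> A") (auto simp: A_def not_less)
  qed
qed

end

locale rru =
  fixes M :: "'a measure" and \<mu> \<nu> :: "real measure" and U V W :: "nat \<Rightarrow> 'a \<Rightarrow> real"
    and \<beta> x y :: real
  assumes prob_space_M: "prob_space M"
    and \<mu>: "prob_space \<mu>" "sets \<mu> = sets borel" "measure \<mu> {0..\<beta>} = 1"
    and \<nu>: "prob_space \<nu>" "sets \<nu> = sets borel" "measure \<nu> {0..\<beta>} = 1"
    and U_measurable [measurable]: "\<And>i. U i \<in> borel_measurable M"
    and V_measurable [measurable]: "\<And>i. V i \<in> borel_measurable M"
    and W_measurable [measurable]: "\<And>i. W i \<in> borel_measurable M"
    and V_uniform: "\<And>i. distr M borel (V i) = uniform_measure lborel {0..1}"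
    and W_uniform: "\<And>i. distr M borel (W i) = uniform_measure lborel {0..1}"
    and initial: "0 \<le> x" "0 \<le> y" "0 < \<beta>" "2 * \<beta> \<le> x + y"
begin

sublocale prob_space M by (rule prob_space_M)

abbreviation "st n \<omega> \<equiv> rru_state \<mu> \<nu> U V W x y n \<omega>"
abbreviation "RX j \<omega> \<equiv> quantile \<mu> (V j \<omega>)"
abbreviation "RY j \<omega> \<equiv> quantile \<nu> (W j \<omega>)"
abbreviation "Z n \<equiv> rru_Z \<mu> \<nu> U V W x y n"
abbreviation "F n \<equiv> rru_filt M \<mu> \<nu> U V W x y n"
abbreviation "Mart n \<equiv> rru_M M \<mu> \<nu> U V W x y n"
abbreviation "bracket n \<equiv> rru_bracket M \<mu> \<nu> U V W x y n"
abbreviation "bracket_inf \<equiv> rru_bracket_inf M \<mu> \<nu> U V W x y"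
abbreviation "dZ j \<omega> \<equiv> Z (Suc j) \<omega> - Z j \<omega>"

definition D :: "nat \<Rightarrow> 'a \<Rightarrow> real" where
  "D n \<omega> = fst (st n \<omega>) + snd (st n \<omega>)"

definition bounded_reinforcements :: "'a \<Rightarrow> bool" where
  "bounded_reinforcements \<omega> \<longleftrightarrow> (\<forall>j. RX j \<omega> \<in> {0..\<beta>} \<and> RY j \<omega> \<in> {0..\<beta>})"

lemma state_Suc:
  "st (Suc n) \<omega> =
    (let I = (if U (Suc n) \<omega> \<le> fst (st n \<omega>) / D n \<omega> then 1 else 0 :: real)
     in (fst (st n \<omega>) + RX (Suc n) \<omega> * I, snd (st n \<omega>) + RY (Suc n) \<omega> * (1 - I)))"
  by (simp add: D_def split_beta Let_def)

lemma Z_eq: "Z n \<omega> = fst (st n \<omega>) / D n \<omega>"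
  by (simp add: rru_Z_def D_def split_beta)

lemma state_nonneg_D_ge:
  assumes "bounded_reinforcements \<omega>"
  shows "0 \<le> fst (st n \<omega>) \<and> 0 \<le> snd (st n \<omega>) \<and> x + y \<le> D n \<omega>"
proof (induction n)
  case 0
  then show ?case using initial by (simp add: D_def)
next
  case (Suc n)
  have "0 \<le> RX (Suc n) \<omega>" "0 \<le> RY (Suc n) \<omega>"
    using assms by (auto simp: bounded_reinforcements_def)
  with Suc show ?case unfolding state_Suc Let_def D_def by auto
qed

lemma D_pos: "bounded_reinforcements \<omega> \<Longrightarrow> 0 < D n \<omega>"
  using state_nonneg_D_ge[of \<omega> n] initial by linarith

lemma Z_in_unit_interval: "bounded_reinforcements \<omega> \<Longrightarrow> 0 \<le> Z n \<omega> \<and> Z n \<omega> \<le> 1"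
  using state_nonneg_D_ge[of \<omega> n] D_pos[of \<omega> n] by (auto simp: Z_eq D_def)

lemma sq_increment_Z_le:
  assumes bounded: "bounded_reinforcements \<omega>"
  shows "(dZ n \<omega>)\<^sup>2 \<le> \<beta> * (1 / D n \<omega> - 1 / D (Suc n) \<omega>)"
proof -
  obtain X Y where XY: "st n \<omega> = (X, Y)" by fastforce
  have D_n: "D n \<omega> = X + Y" by (simp add: D_def XY)
  have state: "0 \<le> X" "0 \<le> Y" "0 < X + Y"
    using state_nonneg_D_ge[OF bounded, of n] D_pos[OF bounded, of n] by (auto simp: D_def XY)
  have R: "0 \<le> RX (Suc n) \<omega>" "RX (Suc n) \<omega> \<le> \<beta>" "0 \<le> RY (Suc n) \<omega>" "RY (Suc n) \<omega> \<le> \<beta>"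
    using bounded by (auto simp: bounded_reinforcements_def)
  show ?thesis
  proof (cases "U (Suc n) \<omega> \<le> X / (X + Y)")
    case True
    then have "st (Suc n) \<omega> = (X + RX (Suc n) \<omega>, Y)" by (simp add: state_Suc D_n XY)
    then show ?thesis
      using urn_proportion_gain_sq_le[OF state R(1,2)] by (simp add: Z_eq D_def XY add_ac)
  next
    case False
    then have "st (Suc n) \<omega> = (X, Y + RY (Suc n) \<omega>)" by (simp add: state_Suc D_n XY)
    then show ?thesis
      using urn_proportion_loss_sq_le[OF state R(3,4)] by (simp add: Z_eq D_def XY add_ac)
  qed
qed

lemma sum_sq_increments_Z_le:
  assumes bounded: "bounded_reinforcements \<omega>"
  shows "(\<Sum>k<m. (dZ (n + k) \<omega>)\<^sup>2) \<le> \<beta> / (x + y)"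
proof -
  have telescope: "(\<Sum>k<m. (dZ (n + k) \<omega>)\<^sup>2) \<le> \<beta> * (1 / D n \<omega> - 1 / D (n + m) \<omega>)"
  proof (induction m)
    case (Suc m)
    then show ?case
      using sq_increment_Z_le[OF bounded, of "n + m"] by (simp add: algebra_simps)
  qed simp
  have "1 / D n \<omega> \<le> 1 / (x + y)"
    using state_nonneg_D_ge[OF bounded, of n] initial by (intro divide_left_mono) auto
  moreover have "0 \<le> 1 / D (n + m) \<omega>" using D_pos[OF bounded] by (simp add: less_imp_le)
  ultimately have "1 / D n \<omega> - 1 / D (n + m) \<omega> \<le> 1 / (x + y)" by linarith
  then have "\<beta> * (1 / D n \<omega> - 1 / D (n + m) \<omega>) \<le> \<beta> * (1 / (x + y))"
    using initial by (intro mult_left_mono) auto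
  with telescope show ?thesis by simp
qed

lemma AE_bounded_reinforcements: "AE \<omega> in M. bounded_reinforcements \<omega>"
proof -
  \<comment> \<open>Level 0 must be excluded: there the quantile is the junk value \<open>Inf UNIV\<close>.\<close>
  have unit: "AE v in uniform_measure lborel {0..1::real}. 0 < v \<and> v \<le> 1"
    by (subst AE_uniform_measure) (auto intro: AE_mp[OF AE_lborel_singleton[of 0]])
  have "AE \<omega> in M. 0 < V j \<omega> \<and> V j \<omega> \<le> 1" for j
    using unit unfolding V_uniform[symmetric, of j] by (subst (asm) AE_distr_iff) auto
  moreover have "AE \<omega> in M. 0 < W j \<omega> \<and> W j \<omega> \<le> 1" for j
    using unit unfolding W_uniform[symmetric, of j] by (subst (asm) AE_distr_iff) auto
  ultimately have "AE \<omega> in M. \<forall>j. (0 < V j \<omega> \<and> V j \<omega> \<le> 1) \<and> (0 < W j \<omega> \<and> W j \<omega> \<le> 1)"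
    by (simp add: AE_all_countable)
  then show ?thesis
    by eventually_elim (auto simp: bounded_reinforcements_def intro: quantile_bounds[OF \<mu>] quantile_bounds[OF \<nu>])
qed

lemma AE_abs_increment_Z_le_1: "AE \<omega> in M. \<bar>dZ j \<omega>\<bar> \<le> 1"
  using AE_bounded_reinforcements
proof eventually_elim
  case (elim \<omega>)
  then show ?case
    using Z_in_unit_interval[OF elim, of j] Z_in_unit_interval[OF elim, of "Suc j"] by linarith
qed

lemma RX_measurable [measurable]: "RX j \<in> borel_measurable M"
  using measurable_compose[OF V_measurable borel_measurable_quantile[OF \<mu>]] by (simp add: comp_def)

lemma RY_measurable [measurable]: "RY j \<in> borel_measurable M"
  using measurable_compose[OF W_measurable borel_measurable_quantile[OF \<nu>]] by (simp add: comp_def)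

lemma state_measurable:
  "(\<lambda>\<omega>. fst (st n \<omega>)) \<in> borel_measurable M \<and> (\<lambda>\<omega>. snd (st n \<omega>)) \<in> borel_measurable M"
proof (induction n)
  case (Suc n)
  then have [measurable]:
    "(\<lambda>\<omega>. fst (st n \<omega>)) \<in> borel_measurable M" "(\<lambda>\<omega>. snd (st n \<omega>)) \<in> borel_measurable M"
    by auto
  show ?case unfolding state_Suc Let_def D_def by measurable
qed simp

lemma fst_state_measurable [measurable]: "(\<lambda>\<omega>. fst (st n \<omega>)) \<in> borel_measurable M"
  and snd_state_measurable [measurable]: "(\<lambda>\<omega>. snd (st n \<omega>)) \<in> borel_measurable M"
  using state_measurable by blast+

lemma Z_measurable [measurable]: "Z n \<in> borel_measurable M"
  unfolding rru_Z_def split_beta Let_def by measurable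

lemma I_measurable [measurable]: "rru_I \<mu> \<nu> U V W x y n \<in> borel_measurable M"
  unfolding rru_I_def split_beta Let_def by measurable

definition generators :: "nat \<Rightarrow> 'a set set" where
  "generators n = (\<Union>j\<in>{1..n}. \<Union>f\<in>{rru_I \<mu> \<nu> U V W x y j, RX j, RY j}.
     {f -` B \<inter> space M | B. B \<in> sets borel})"

lemma generators_subset: "generators n \<subseteq> sets M"
  unfolding generators_def by (fastforce intro: measurable_sets)

lemma sets_F: "sets (F n) = sigma_sets (space M) (generators n)"
  unfolding rru_filt_def generators_def[symmetric]
  by (rule sets_measure_of) (use generators_subset sets.sets_into_space in blast)

lemma space_F: "space (F n) = space M"
  unfolding rru_filt_def by (simp add: space_measure_of_conv)

lemma sets_F_mono: "n \<le> m \<Longrightarrow> sets (F n) \<subseteq> sets (F m)"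
  unfolding sets_F generators_def by (intro sigma_sets_mono' UN_mono) auto

lemma finite_measure_subalgebra_F: "finite_measure_subalgebra M (F n)"
proof unfold_locales
  show "subalgebra M (F n)"
    unfolding subalgebra_def sets_F space_F using sets.sigma_sets_subset[OF generators_subset] by simp
qed

abbreviation "dB j \<equiv> real_cond_exp M (F j) (\<lambda>\<omega>. (Mart (Suc j) \<omega> - Mart j \<omega>)\<^sup>2)"

lemma increment_Mart: "Mart (Suc j) \<omega> - Mart j \<omega> = dZ j \<omega> - real_cond_exp M (F j) (dZ j) \<omega>"
  by (simp add: rru_M_def rru_A_def)

lemma bracket_increment_eq:
  "dB j = real_cond_exp M (F j) (\<lambda>\<omega>. (dZ j \<omega> - real_cond_exp M (F j) (dZ j) \<omega>)\<^sup>2)"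
  by (simp only: increment_Mart)

lemma AE_bracket_increment_nonneg: "AE \<omega> in M. 0 \<le> dB j \<omega>"
proof -
  interpret finite_measure_subalgebra M "F j" by (rule finite_measure_subalgebra_F)
  show ?thesis unfolding bracket_increment_eq by (rule real_cond_exp_pos) auto
qed

lemma nn_set_integral_bracket_increment_le:
  assumes "A \<in> sets (F n)" "n \<le> j"
  shows "(\<integral>\<^sup>+\<omega>. ennreal (dB j \<omega>) * indicator A \<omega> \<partial>M) \<le> (\<integral>\<^sup>+\<omega>. ennreal ((dZ j \<omega>)\<^sup>2) * indicator A \<omega> \<partial>M)"
proof -
  interpret finite_measure_subalgebra M "F j" by (rule finite_measure_subalgebra_F)
  have "A \<in> sets (F j)" using sets_F_mono[OF assms(2)] assms(1) by blast
  show ?thesis unfolding bracket_increment_eq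
    by (rule nn_set_integral_cond_variance_le[OF _ AE_abs_increment_Z_le_1 \<open>A \<in> sets (F j)\<close>])
      measurable
qed

lemma AE_bracket_tail_eq:
  "AE \<omega> in M. bracket_inf \<omega> - ennreal (bracket n \<omega>) = (\<Sum>k. ennreal (dB (n + k) \<omega>))"
proof -
  have "AE \<omega> in M. \<forall>j. 0 \<le> dB j \<omega>"
    using AE_bracket_increment_nonneg by (simp add: AE_all_countable)
  then show ?thesis
  proof eventually_elim
    case (elim \<omega>)
    have partial_sums: "ennreal (bracket m \<omega>) = (\<Sum>j<m. ennreal (dB j \<omega>))" for m
      unfolding rru_bracket_def using elim by (simp add: sum_ennreal)
    have "bracket_inf \<omega> = (\<Sum>j. ennreal (dB j \<omega>))"
      unfolding rru_bracket_inf_def partial_sums by (simp add: suminf_eq_SUP)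
    also have "\<dots> = (\<Sum>k. ennreal (dB (k + n) \<omega>)) + ennreal (bracket n \<omega>)"
      unfolding partial_sums by (rule suminf_offset) simp
    finally show ?case by (simp add: add.commute)
  qed
qed

lemma AE_suminf_sq_increments_Z_le:
  "AE \<omega> in M. (\<Sum>k. ennreal ((dZ (n + k) \<omega>)\<^sup>2)) \<le> ennreal (\<beta> / (x + y))"
  using AE_bounded_reinforcements
proof eventually_elim
  case (elim \<omega>)
  have "(\<Sum>k<m. ennreal ((dZ (n + k) \<omega>)\<^sup>2)) \<le> ennreal (\<beta> / (x + y))" for m
    using sum_sq_increments_Z_le[OF elim, where m = m and n = n] by (simp add: sum_ennreal ennreal_leI)
  then show ?case by (simp add: suminf_eq_SUP SUP_least)
qed

lemma nn_set_integral_bracket_tail_le: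
  assumes A: "A \<in> sets (F n)"
  shows "(\<integral>\<^sup>+\<omega>. (bracket_inf \<omega> - ennreal (bracket n \<omega>)) * indicator A \<omega> \<partial>M)
    \<le> ennreal (\<beta> / (x + y)) * emeasure M A"
proof -
  interpret finite_measure_subalgebra M "F n" by (rule finite_measure_subalgebra_F)
  have [measurable]: "A \<in> sets M" using A subalg by (auto simp: subalgebra_def)
  have "(\<integral>\<^sup>+\<omega>. (bracket_inf \<omega> - ennreal (bracket n \<omega>)) * indicator A \<omega> \<partial>M)
      = (\<integral>\<^sup>+\<omega>. (\<Sum>k. ennreal (dB (n + k) \<omega>) * indicator A \<omega>) \<partial>M)"
    by (intro nn_integral_cong_AE) (use AE_bracket_tail_eq[of n] in \<open>eventually_elim, simp\<close>)
  also have "\<dots> = (\<Sum>k. \<integral>\<^sup>+\<omega>. ennreal (dB (n + k) \<omega>) * indicator A \<omega> \<partial>M)"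
    by (rule nn_integral_suminf) measurable
  also have "\<dots> \<le> (\<Sum>k. \<integral>\<^sup>+\<omega>. ennreal ((dZ (n + k) \<omega>)\<^sup>2) * indicator A \<omega> \<partial>M)"
    by (intro suminf_le nn_set_integral_bracket_increment_le[OF A]) auto
  also have "\<dots> = (\<integral>\<^sup>+\<omega>. (\<Sum>k. ennreal ((dZ (n + k) \<omega>)\<^sup>2)) * indicator A \<omega> \<partial>M)"
    by (subst nn_integral_suminf[symmetric]) auto
  also have "\<dots> \<le> (\<integral>\<^sup>+\<omega>. ennreal (\<beta> / (x + y)) * indicator A \<omega> \<partial>M)"
    by (intro nn_integral_mono_AE)
      (use AE_suminf_sq_increments_Z_le[of n] in \<open>eventually_elim, simp add: mult_right_mono\<close>)
  also have "\<dots> = ennreal (\<beta> / (x + y)) * emeasure M A"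
    by (simp add: nn_integral_cmult_indicator)
  finally show ?thesis .
qed

lemma AE_nn_cond_exp_bracket_tail_le:
  "AE \<omega> in M. nn_cond_exp M (F n) (\<lambda>\<omega>'. bracket_inf \<omega>' - ennreal (bracket n \<omega>')) \<omega>
    \<le> ennreal (\<beta> / (x + y))"
proof -
  interpret finite_measure_subalgebra M "F n" by (rule finite_measure_subalgebra_F)
  show ?thesis
  proof (rule AE_nn_cond_exp_le_const)
    show "(\<lambda>\<omega>'. bracket_inf \<omega>' - ennreal (bracket n \<omega>')) \<in> borel_measurable M"
      unfolding rru_bracket_inf_def rru_bracket_def by measurable
  qed (use nn_set_integral_bracket_tail_le in auto)
qed

end

theorem lemmaA3:
  fixes M :: "'a measure" and \<mu> \<nu> :: "real measure"
    and U V W :: "nat \<Rightarrow> 'a \<Rightarrow> real"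
    and m0 \<beta> x y :: real and n :: nat
  assumes "prob_space M"
    and "0 < m0" and "m0 \<le> \<beta>"
    \<comment> \<open>(\<mu>, \<nu>) \<in> \<P>\<close>
    and "prob_space \<mu>" and "sets \<mu> = sets borel" and "measure \<mu> {0..\<beta>} = 1"
    and "prob_space \<nu>" and "sets \<nu> = sets borel" and "measure \<nu> {0..\<beta>} = 1"
    and "(\<integral>k. k \<partial>\<mu>) = (\<integral>k. k \<partial>\<nu>)" and "(\<integral>k. k \<partial>\<mu>) \<ge> m0"
    \<comment> \<open>U_n i.i.d. uniform[0,1]\<close>
    and "\<And>i. U i \<in> borel_measurable M"
    and "prob_space.indep_vars M (\<lambda>_. borel) U UNIV"
    and "\<And>i. distr M borel (U i) = uniform_measure lborel {0..1}"
    \<comment> \<open>(V_n, W_n) i.i.d. with uniform[0,1] marginals\<close>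
    and "\<And>i. V i \<in> borel_measurable M" and "\<And>i. W i \<in> borel_measurable M"
    and "prob_space.indep_vars M (\<lambda>_. borel) (\<lambda>i \<omega>. (V i \<omega>, W i \<omega>)) UNIV"
    and "\<And>i. distr M borel (\<lambda>\<omega>. (V i \<omega>, W i \<omega>)) = distr M borel (\<lambda>\<omega>. (V 0 \<omega>, W 0 \<omega>))"
    and "\<And>i. distr M borel (V i) = uniform_measure lborel {0..1}"
    and "\<And>i. distr M borel (W i) = uniform_measure lborel {0..1}"
    \<comment> \<open>{U_n} independent of {(V_n, W_n)}\<close>
    and "prob_space.indep_set M
           (sigma_sets (space M) (\<Union>i. {U i -` B \<inter> space M | B. B \<in> sets borel}))
           (sigma_sets (space M) (\<Union>i. {(\<lambda>\<omega>. (V i \<omega>, W i \<omega>)) -` B \<inter> space M | B. B \<in> sets borel}))"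
    \<comment> \<open>(x, y) \<in> \<S>, D_0 = x + y \<ge> 2\<beta>\<close>
    and "x \<ge> 0" and "y \<ge> 0" and "(x, y) \<noteq> (0, 0)" and "x + y \<ge> 2 * \<beta>"
  shows "AE \<omega> in M.
    nn_cond_exp M (rru_filt M \<mu> \<nu> U V W x y n)
      (\<lambda>\<omega>'. rru_bracket_inf M \<mu> \<nu> U V W x y \<omega>' - ennreal (rru_bracket M \<mu> \<nu> U V W x y n \<omega>')) \<omega>
    \<le> ennreal (\<beta> / (x + y))"
proof -
  have "0 < \<beta>" using assms(2,3) by linarith
  interpret rru M \<mu> \<nu> U V W \<beta> x y
    by (rule rru.intro[OF assms(1,4-9,12,15,16,19,20,22,23) \<open>0 < \<beta>\<close> assms(25)])
  show ?thesis by (rule AE_nn_cond_exp_bracket_tail_le)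
qed

end
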